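(* Suppose Assumption 1 holds, let $\gamma\in(0,1)$ be as in the context, and let $c_J\ge1/\gamma$. Then for every $\theta\in\mathbb{R}^{|\mathcal{S}||\mathcal{A}|}$, $\mu\in\Delta_{\mathcal{S}}$, $V\in\mathbb{R}^{|\mathcal{S}|}$ and $J\in\mathbb{R}$, $$\Big\langle\begin{bmatrix}\Pi_{\mathcal{E}_\perp}(V-V^{\pi_\theta,\mu})\\ J-J(\pi_\theta,\mu)\end{bmatrix},\begin{bmatrix}\Pi_{\mathcal{E}_\perp}\bar G^V(\theta,V,J,\mu)\\ \bar G^J(\theta,J,\mu)\end{bmatrix}\Big\rangle\le-\frac{\gamma}{2}\Big(\|\Pi_{\mathcal{E}_\perp}(V-V^{\pi_\theta,\mu})\|^2+(J-J(\pi_\theta,\mu))^2\Big).$$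
   Context: $\mathcal{S},\mathcal{A}$ are finite sets. A mean field game has, for each mean field $\mu\in\Delta_{\mathcal{S}}$, a transition kernel $\mathcal{P}^\mu(s'\mid s,a)$ and a reward $r(s,a,\mu)\in[0,1]$. For a policy $\pi$, $P^{\pi,\mu}_{s',s}=\sum_a\mathcal{P}^\mu(s'\mid s,a)\pi(a\mid s)$ has stationary distribution $\nu^{\pi,\mu}$; $J(\pi,\mu)=\mathbb{E}_{s\sim\nu^{\pi,\mu},a\sim\pi(\cdot\mid s)}[r(s,a,\mu)]$; $V^{\pi,\mu}(s)=\mathbb{E}[\sum_{t\ge0}(r(s_t,a_t,\mu)-J(\pi,\mu))\mid s_0=s]$ with $a_t\sim\pi(\cdot\mid s_t)$, $s_{t+1}\sim\mathcal{P}^\mu(\cdot\mid s_t,a_t)$. Softmax policies $\pi_\theta(a\mid s)=\exp(\theta(s,a))/\sum_{a'}\exp(\theta(s,a'))$. $e_s$ is the indicator vector of $s$; $\Pi_{\mathcal{E}_\perp}=I-\mathbf{1}\mathbf{1}^\top/|\mathcal{S}|$ is the orthogonal projection onto the complement $\mathcal{E}_\perp$ of the span of the all-ones vector. With expectations over $s\sim\nu^{\pi_\theta,\mu},a\sim\pi_\theta(\cdot\mid s),s'\sim\mathcal{P}^\mu(\cdot\mid s,a)$: $\bar G^V(\theta,V,J,\mu)=\mathbb{E}[(r(s,a,\mu)-J+V(s')-V(s))e_s]$ and $\bar G^J(\theta,J,\mu)=\mathbb{E}[c_J(r(s,a,\mu)-J)]$ for a constant $c_J>0$. Norms are Euclidean.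 Assumption 1: for all $\pi,\mu$ the chain $P^{\pi,\mu}$ is irreducible and aperiodic and there are $C_0\ge1,C_1\in(0,1)$ with $\sup_sd_{TV}(\mathbb{P}(s_k=\cdot\mid s_0=s),\nu^{\pi,\mu})\le C_0C_1^k$ for all $k$, where $d_{TV}$ is total variation distance. $\gamma\in(0,1)$ is a constant such that $V^\top\mathbb{E}_{s\sim\nu^{\pi_\theta,\mu},a\sim\pi_\theta(\cdot\mid s),s'\sim\mathcal{P}^\mu(\cdot\mid s,a)}[e_s(e_{s'}-e_s)^\top]V\le-\gamma\|V\|^2$ for all $\theta,\mu$ and all $V\in\mathcal{E}_\perp$ (such a constant exists under Assumption 1). *)

theory Defs
  imports "HOL-Analysis.Analysis"
begin

text \<open>A mean field is a function 's \<Rightarrow> real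
  in the probability prob_simplex. The kernel is P :: ('s \<Rightarrow> real) \<Rightarrow> 's \<Rightarrow> 'a \<Rightarrow> 's \<Rightarrow> real,
  with P mu s a s' the probability of moving to s' from s under action a;
  the reward is r :: 's \<Rightarrow> 'a \<Rightarrow> ('s \<Rightarrow> real) \<Rightarrow> real. A policy is pol :: 's \<Rightarrow> 'a \<Rightarrow> real
  with pol s a = pol(a|s).\<close>

definition prob_simplex :: "('b::finite \<Rightarrow> real) set" where
  "prob_simplex = {p. (\<forall>x. 0 \<le> p x) \<and> (\<Sum>x\<in>UNIV. p x) = 1}"

definition is_policy :: "('s::finite \<Rightarrow> 'a::finite \<Rightarrow> real) \<Rightarrow> bool" where
  "is_policy pol \<longleftrightarrow> (\<forall>s. pol s \<in> prob_simplex)"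

definition softmax :: "('s::finite \<Rightarrow> 'a::finite \<Rightarrow> real) \<Rightarrow> 's \<Rightarrow> 'a \<Rightarrow> real" where
  "softmax \<theta> s a = exp (\<theta> s a) / (\<Sum>a'\<in>UNIV. exp (\<theta> s a'))"

definition Pmat :: "(('s::finite \<Rightarrow> real) \<Rightarrow> 's \<Rightarrow> 'a::finite \<Rightarrow> 's \<Rightarrow> real) \<Rightarrow> ('s \<Rightarrow> real)
    \<Rightarrow> ('s \<Rightarrow> 'a \<Rightarrow> real) \<Rightarrow> 's \<Rightarrow> 's \<Rightarrow> real" where
  "Pmat P mu pol s s' = (\<Sum>a\<in>UNIV. P mu s a s' * pol s a)"

fun mpow :: "('s::finite \<Rightarrow> 's \<Rightarrow> real) \<Rightarrow> nat \<Rightarrow> 's \<Rightarrow> 's \<Rightarrow> real" where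
  "mpow M 0 s s' = (if s = s' then 1 else 0)"
| "mpow M (Suc k) s s' = (\<Sum>t\<in>UNIV. mpow M k s t * M t s')"

definition irreducible_chain :: "('s::finite \<Rightarrow> 's \<Rightarrow> real) \<Rightarrow> bool" where
  "irreducible_chain M \<longleftrightarrow> (\<forall>s s'. \<exists>k. 0 < mpow M k s s')"

definition aperiodic_chain :: "('s::finite \<Rightarrow> 's \<Rightarrow> real) \<Rightarrow> bool" where
  "aperiodic_chain M \<longleftrightarrow> (\<forall>s. Gcd {k. 0 < k \<and> 0 < mpow M k s s} = (1::nat))"

definition tv_dist :: "('s::finite \<Rightarrow> real) \<Rightarrow> ('s \<Rightarrow> real) \<Rightarrow> real" where
  "tv_dist p q = (\<Sum>s\<in>UNIV. \<bar>p s - q s\<bar>) / 2"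

text \<open>The (unique, under irreducibility) stationary distribution.\<close>
definition stat_dist :: "('s::finite \<Rightarrow> 's \<Rightarrow> real) \<Rightarrow> 's \<Rightarrow> real" where
  "stat_dist M = (THE nu. nu \<in> prob_simplex \<and> (\<forall>s'. (\<Sum>s\<in>UNIV. nu s * M s s') = nu s'))"

definition nu :: "(('s::finite \<Rightarrow> real) \<Rightarrow> 's \<Rightarrow> 'a::finite \<Rightarrow> 's \<Rightarrow> real) \<Rightarrow> ('s \<Rightarrow> 'a \<Rightarrow> real)
    \<Rightarrow> ('s \<Rightarrow> real) \<Rightarrow> 's \<Rightarrow> real" where
  "nu P pol mu = stat_dist (Pmat P mu pol)"

definition Jfun :: "(('s::finite \<Rightarrow> real) \<Rightarrow> 's \<Rightarrow> 'a::finite \<Rightarrow> 's \<Rightarrow> real)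
    \<Rightarrow> ('s \<Rightarrow> 'a \<Rightarrow> ('s \<Rightarrow> real) \<Rightarrow> real) \<Rightarrow> ('s \<Rightarrow> 'a \<Rightarrow> real) \<Rightarrow> ('s \<Rightarrow> real) \<Rightarrow> real" where
  "Jfun P r pol mu = (\<Sum>s\<in>UNIV. nu P pol mu s * (\<Sum>a\<in>UNIV. pol s a * r s a mu))"

definition Vfun :: "(('s::finite \<Rightarrow> real) \<Rightarrow> 's \<Rightarrow> 'a::finite \<Rightarrow> 's \<Rightarrow> real)
    \<Rightarrow> ('s \<Rightarrow> 'a \<Rightarrow> ('s \<Rightarrow> real) \<Rightarrow> real) \<Rightarrow> ('s \<Rightarrow> 'a \<Rightarrow> real) \<Rightarrow> ('s \<Rightarrow> real) \<Rightarrow> 's \<Rightarrow> real" where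
  "Vfun P r pol mu s = (\<Sum>t. (\<Sum>s'\<in>UNIV. mpow (Pmat P mu pol) t s s' *
        (\<Sum>a\<in>UNIV. pol s' a * r s' a mu)) - Jfun P r pol mu)"

definition assumption1 :: "(('s::finite \<Rightarrow> real) \<Rightarrow> 's \<Rightarrow> 'a::finite \<Rightarrow> 's \<Rightarrow> real)
    \<Rightarrow> real \<Rightarrow> real \<Rightarrow> bool" where
  "assumption1 P C0 C1 \<longleftrightarrow> 1 \<le> C0 \<and> 0 < C1 \<and> C1 < 1 \<and>
     (\<forall>pol mu. is_policy pol \<and> mu \<in> prob_simplex \<longrightarrow>
        irreducible_chain (Pmat P mu pol) \<and> aperiodic_chain (Pmat P mu pol) \<and>
        (\<forall>k s. tv_dist (mpow (Pmat P mu pol) k s) (stat_dist (Pmat P mu pol)) \<le> C0 * C1 ^ k))"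

text \<open>Orthogonal projection onto the complement of span of the all-ones vector.\<close>
definition proj_perp :: "('s::finite \<Rightarrow> real) \<Rightarrow> 's \<Rightarrow> real" where
  "proj_perp V = (\<lambda>s. V s - (\<Sum>t\<in>UNIV. V t) / real CARD('s))"

definition inner_vec :: "('s::finite \<Rightarrow> real) \<Rightarrow> ('s \<Rightarrow> real) \<Rightarrow> real" where
  "inner_vec x y = (\<Sum>s\<in>UNIV. x s * y s)"

definition norm2 :: "('s::finite \<Rightarrow> real) \<Rightarrow> real" where
  "norm2 x = sqrt (\<Sum>s\<in>UNIV. (x s)^2)"

text \<open>bar G^V(theta,V,J,mu) = E[(r(s,a,mu) - J + V(s') - V(s)) e_s], componentwise.\<close>
definition GV :: "(('s::finite \<Rightarrow> real) \<Rightarrow> 's \<Rightarrow> 'a::finite \<Rightarrow> 's \<Rightarrow> real)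
    \<Rightarrow> ('s \<Rightarrow> 'a \<Rightarrow> ('s \<Rightarrow> real) \<Rightarrow> real) \<Rightarrow> ('s \<Rightarrow> 'a \<Rightarrow> real) \<Rightarrow> ('s \<Rightarrow> real) \<Rightarrow> real
    \<Rightarrow> ('s \<Rightarrow> real) \<Rightarrow> 's \<Rightarrow> real" where
  "GV P r \<theta> V J mu = (\<lambda>x. (\<Sum>s\<in>UNIV. nu P (softmax \<theta>) mu s * (\<Sum>a\<in>UNIV. softmax \<theta> s a *
      (\<Sum>s'\<in>UNIV. P mu s a s' * ((r s a mu - J + V s' - V s) * (if s = x then 1 else 0))))))"

definition GJ :: "(('s::finite \<Rightarrow> real) \<Rightarrow> 's \<Rightarrow> 'a::finite \<Rightarrow> 's \<Rightarrow> real)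
    \<Rightarrow> ('s \<Rightarrow> 'a \<Rightarrow> ('s \<Rightarrow> real) \<Rightarrow> real) \<Rightarrow> real \<Rightarrow> ('s \<Rightarrow> 'a \<Rightarrow> real) \<Rightarrow> real
    \<Rightarrow> ('s \<Rightarrow> real) \<Rightarrow> real" where
  "GJ P r cJ \<theta> J mu = (\<Sum>s\<in>UNIV. nu P (softmax \<theta>) mu s * (\<Sum>a\<in>UNIV. softmax \<theta> s a *
      (\<Sum>s'\<in>UNIV. P mu s a s' * (cJ * (r s a mu - J)))))"

text \<open>V^T E[e_s (e_{s'} - e_s)^T] V.\<close>
definition quad_form :: "(('s::finite \<Rightarrow> real) \<Rightarrow> 's \<Rightarrow> 'a::finite \<Rightarrow> 's \<Rightarrow> real)
    \<Rightarrow> ('s \<Rightarrow> 'a \<Rightarrow> real) \<Rightarrow> ('s \<Rightarrow> real) \<Rightarrow> ('s \<Rightarrow> real) \<Rightarrow> real" where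
  "quad_form P \<theta> mu V = (\<Sum>s\<in>UNIV. nu P (softmax \<theta>) mu s * (\<Sum>a\<in>UNIV. softmax \<theta> s a *
      (\<Sum>s'\<in>UNIV. P mu s a s' * (V s * (V s' - V s)))))"

end

theory Submission
  imports Defs
begin

text \<open>Write \<open>W = \<Pi>(V - V\<^sup>\<pi>)\<close> and \<open>e = J - J(\<pi>)\<close>. The relative value function solves
  the Poisson equation \<open>V\<^sup>\<pi> = r\<^sub>\<pi> - J(\<pi>) + P V\<^sup>\<pi>\<close>, so \<open>G\<^sup>V = \<nu> \<odot> (P W - W - e)\<close>
  (centring is invisible to the stochastic matrix \<open>P\<close>). Hence the first inner product is
  \<open>W\<^sup>T E[e\<^sub>s (e\<^sub>s\<^sub>' - e\<^sub>s)\<^sup>T] W - e \<langle>W, \<nu>\<rangle> \<le> -\<gamma> \<parallel>W\<parallel>\<^sup>2 + \<bar>e\<bar> \<parallel>W\<parallel>\<close>, while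
  \<open>e G\<^sup>J = -c\<^sub>J e\<^sup>2 \<le> -e\<^sup>2/\<gamma>\<close>; completing the square finishes the proof.
  Assumption 1 enters only through geometric mixing, which makes the series defining \<open>V\<^sup>\<pi>\<close>
  converge and forces \<open>\<nu>\<close> to be a probability vector.\<close>

lemma prob_simplex_sum: "p \<in> prob_simplex \<Longrightarrow> (\<Sum>x\<in>UNIV. p x) = 1"
  by (simp add: prob_simplex_def)

lemma prob_simplex_nonneg: "p \<in> prob_simplex \<Longrightarrow> 0 \<le> p x"
  by (simp add: prob_simplex_def)

lemma mpow_Suc_left:
  "mpow M (Suc k) s s' = (\<Sum>t\<in>UNIV. M s t * mpow M k t s')"
proof (induction k arbitrary: s')
  case 0
  have "\<And>t. (if s = t then 1 else 0) * M t s' = (if s = t then M s s' else 0)"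
    and "\<And>t. M s t * (if t = s' then 1 else 0) = (if t = s' then M s s' else 0)"
    by simp_all
  then show ?case by simp
next
  case (Suc k)
  have "mpow M (Suc (Suc k)) s s' = (\<Sum>u\<in>UNIV. (\<Sum>t\<in>UNIV. M s t * mpow M k t u) * M u s')"
    using Suc by simp
  also have "\<dots> = (\<Sum>t\<in>UNIV. M s t * (\<Sum>u\<in>UNIV. mpow M k t u * M u s'))"
    by (simp add: sum_distrib_left sum_distrib_right mult.assoc) (rule sum.swap)
  finally show ?case by simp
qed

lemma mpow_in_prob_simplex:
  assumes rows: "\<And>s. M s \<in> prob_simplex"
  shows "mpow M k s \<in> prob_simplex"
proof (induction k)
  case 0
  show ?case by (simp add: prob_simplex_def)
next
  case (Suc k)
  have "(\<Sum>s'\<in>UNIV. mpow M (Suc k) s s') = (\<Sum>t\<in>UNIV. mpow M k s t * (\<Sum>s'\<in>UNIV. M t s'))"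
    by (simp add: sum_distrib_left) (rule sum.swap)
  also have "\<dots> = 1"
    using Suc rows by (simp add: prob_simplex_def)
  finally show ?case
    using Suc rows by (auto simp: prob_simplex_def intro!: sum_nonneg)
qed

lemma nonpos_if_le_geometric:
  fixes a c q :: real
  assumes "\<And>k. a \<le> c * q^k" and "\<bar>q\<bar> < 1"
  shows "a \<le> 0"
proof -
  have "(\<lambda>k. c * q^k) \<longlonglongrightarrow> 0"
    using assms(2) by (intro tendsto_mult_right_zero LIMSEQ_power_zero) simp
  then show ?thesis
    using assms(1) by (intro LIMSEQ_le_const) auto
qed

definition geometric_mixing :: "('s::finite \<Rightarrow> 's \<Rightarrow> real) \<Rightarrow> ('s \<Rightarrow> real) \<Rightarrow> real \<Rightarrow> real \<Rightarrow> bool" where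
  "geometric_mixing M q C0 C1 \<longleftrightarrow> \<bar>C1\<bar> < 1 \<and> (\<forall>k s. tv_dist (mpow M k s) q \<le> C0 * C1 ^ k)"

lemma geometric_mixingD:
  assumes "geometric_mixing M q C0 C1"
  shows "\<bar>C1\<bar> < 1" and "(\<Sum>y\<in>UNIV. \<bar>mpow M k s y - q y\<bar>) \<le> 2 * C0 * C1 ^ k"
  using assms by (auto simp: geometric_mixing_def tv_dist_def algebra_simps)

lemma prob_simplex_if_geometric_mixing:
  fixes M :: "'s::finite \<Rightarrow> 's \<Rightarrow> real"
  assumes rows: "\<And>s. M s \<in> prob_simplex" and mix: "geometric_mixing M q C0 C1"
  shows "q \<in> prob_simplex"
proof -
  note C1 = geometric_mixingD(1)[OF mix]
  have "0 \<le> q y" for y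
  proof -
    have "- q y \<le> 0"
    proof (rule nonpos_if_le_geometric[OF _ C1])
      fix k
      have "0 \<le> mpow M k y y"
        by (rule prob_simplex_nonneg[OF mpow_in_prob_simplex[of M k y, OF rows]])
      then have "- q y \<le> \<bar>mpow M k y y - q y\<bar>"
        by linarith
      also have "\<dots> \<le> (\<Sum>y'\<in>UNIV. \<bar>mpow M k y y' - q y'\<bar>)"
        by (rule member_le_sum) auto
      finally show "- q y \<le> 2 * C0 * C1 ^ k"
        using geometric_mixingD(2)[OF mix] by (rule order_trans)
    qed
    then show ?thesis
      by simp
  qed
  moreover have "(\<Sum>y\<in>UNIV. q y) = 1"
  proof -
    fix s :: 's
    have "\<bar>1 - (\<Sum>y\<in>UNIV. q y)\<bar> \<le> 0"
    proof (rule nonpos_if_le_geometric[OF _ C1])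
      fix k
      have "\<bar>1 - (\<Sum>y\<in>UNIV. q y)\<bar> = \<bar>\<Sum>y\<in>UNIV. mpow M k s y - q y\<bar>"
        using prob_simplex_sum[OF mpow_in_prob_simplex[of M k s, OF rows]] by (simp add: sum_subtractf)
      also have "\<dots> \<le> (\<Sum>y\<in>UNIV. \<bar>mpow M k s y - q y\<bar>)"
        by (rule sum_abs)
      finally show "\<bar>1 - (\<Sum>y\<in>UNIV. q y)\<bar> \<le> 2 * C0 * C1 ^ k"
        using geometric_mixingD(2)[OF mix] by (rule order_trans)
    qed
    then show ?thesis
      by simp
  qed
  ultimately show ?thesis
    by (simp add: prob_simplex_def)
qed

definition relative_value :: "('s::finite \<Rightarrow> 's \<Rightarrow> real) \<Rightarrow> ('s \<Rightarrow> real) \<Rightarrow> ('s \<Rightarrow> real) \<Rightarrow> 's \<Rightarrow> real" where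
  "relative_value M q g x = (\<Sum>t. (\<Sum>y\<in>UNIV. mpow M t x y * g y) - (\<Sum>y\<in>UNIV. q y * g y))"

lemma relative_value_term_bound:
  assumes "geometric_mixing M q C0 C1"
  shows "\<bar>(\<Sum>y\<in>UNIV. mpow M t x y * g y) - (\<Sum>y\<in>UNIV. q y * g y)\<bar>
           \<le> 2 * C0 * (\<Sum>z\<in>UNIV. \<bar>g z\<bar>) * C1 ^ t"
proof -
  have "\<bar>(\<Sum>y\<in>UNIV. mpow M t x y * g y) - (\<Sum>y\<in>UNIV. q y * g y)\<bar>
          = \<bar>\<Sum>y\<in>UNIV. (mpow M t x y - q y) * g y\<bar>"
    by (simp add: sum_subtractf left_diff_distrib)
  also have "\<dots> \<le> (\<Sum>y\<in>UNIV. \<bar>mpow M t x y - q y\<bar> * (\<Sum>z\<in>UNIV. \<bar>g z\<bar>))"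
  proof (rule order_trans[OF sum_abs], intro sum_mono)
    fix y
    have "\<bar>g y\<bar> \<le> (\<Sum>z\<in>UNIV. \<bar>g z\<bar>)"
      by (rule member_le_sum) auto
    then show "\<bar>(mpow M t x y - q y) * g y\<bar> \<le> \<bar>mpow M t x y - q y\<bar> * (\<Sum>z\<in>UNIV. \<bar>g z\<bar>)"
      by (simp add: abs_mult mult_left_mono)
  qed
  also have "\<dots> \<le> 2 * C0 * C1 ^ t * (\<Sum>z\<in>UNIV. \<bar>g z\<bar>)"
    unfolding sum_distrib_right[symmetric]
    by (intro mult_right_mono geometric_mixingD(2)[OF assms]) (auto intro: sum_nonneg)
  finally show ?thesis
    by (simp add: algebra_simps)
qed

lemma summable_relative_value_terms:
  assumes "geometric_mixing M q C0 C1"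
  shows "summable (\<lambda>t. (\<Sum>y\<in>UNIV. mpow M t x y * g y) - (\<Sum>y\<in>UNIV. q y * g y))"
proof (rule summable_comparison_test)
  show "summable (\<lambda>t. 2 * C0 * (\<Sum>z\<in>UNIV. \<bar>g z\<bar>) * C1 ^ t)"
    using geometric_mixingD(1)[OF assms] by (intro summable_mult summable_geometric) simp
qed (use relative_value_term_bound[OF assms] in auto)

text \<open>Applying \<open>M\<close> to the relative value shifts its defining series by one step.\<close>

lemma relative_value_poisson:
  assumes rows: "\<And>s. M s \<in> prob_simplex" and mix: "geometric_mixing M q C0 C1"
  shows "relative_value M q g x
           = g x - (\<Sum>y\<in>UNIV. q y * g y) + (\<Sum>y\<in>UNIV. M x y * relative_value M q g y)"
proof -
  define f where "f t x = (\<Sum>y\<in>UNIV. mpow M t x y * g y) - (\<Sum>y\<in>UNIV. q y * g y)" for t x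
  have summable: "summable (\<lambda>t. f t y)" for y
    unfolding f_def by (rule summable_relative_value_terms[OF mix])
  have step: "(\<Sum>y\<in>UNIV. M x y * f t y) = f (Suc t) x" for t
  proof -
    have "(\<Sum>y\<in>UNIV. M x y * f t y)
            = (\<Sum>y\<in>UNIV. M x y * (\<Sum>z\<in>UNIV. mpow M t y z * g z))
              - (\<Sum>y\<in>UNIV. M x y) * (\<Sum>y\<in>UNIV. q y * g y)"
      unfolding f_def by (simp add: right_diff_distrib sum_subtractf sum_distrib_right)
    also have "(\<Sum>y\<in>UNIV. M x y * (\<Sum>z\<in>UNIV. mpow M t y z * g z))
                 = (\<Sum>z\<in>UNIV. (\<Sum>y\<in>UNIV. M x y * mpow M t y z) * g z)"
      by (simp add: sum_distrib_left sum_distrib_right mult.assoc) (rule sum.swap)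
    finally show ?thesis
      using prob_simplex_sum[OF rows[of x]] unfolding f_def mpow_Suc_left by simp
  qed
  have "(\<Sum>y\<in>UNIV. M x y * relative_value M q g y) = (\<Sum>y\<in>UNIV. \<Sum>t. M x y * f t y)"
    unfolding relative_value_def f_def[symmetric] by (simp add: suminf_mult summable)
  also have "\<dots> = (\<Sum>t. \<Sum>y\<in>UNIV. M x y * f t y)"
    by (rule suminf_sum[symmetric]) (simp add: summable summable_mult)
  also have "\<dots> = (\<Sum>t. f (Suc t) x)"
    by (simp add: step)
  finally have "(\<Sum>y\<in>UNIV. M x y * relative_value M q g y) = (\<Sum>t. f (Suc t) x)" .
  moreover have "relative_value M q g x = f 0 x + (\<Sum>t. f (Suc t) x)"
    unfolding relative_value_def f_def[symmetric] using suminf_split_head[OF summable[of x]] by simp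
  moreover have "f 0 x = g x - (\<Sum>y\<in>UNIV. q y * g y)"
  proof -
    have "mpow M 0 x y * g y = (if x = y then g x else 0)" for y
      by simp
    then show ?thesis
      unfolding f_def by simp
  qed
  ultimately show ?thesis
    by simp
qed

lemma sum_softmax: "(\<Sum>a\<in>UNIV. softmax \<theta> s a) = 1"
proof -
  have "(\<Sum>a\<in>UNIV. exp (\<theta> s a)) \<noteq> 0"
    by (metis less_irrefl exp_gt_zero finite UNIV_not_empty sum_pos)
  then show ?thesis
    unfolding softmax_def by (simp flip: sum_divide_distrib)
qed

lemma softmax_is_policy: "is_policy (softmax \<theta>)"
  unfolding is_policy_def prob_simplex_def softmax_def
  using sum_softmax[unfolded softmax_def] by (auto intro!: divide_nonneg_nonneg sum_nonneg)

lemma Pmat_in_prob_simplex: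
  assumes pol: "is_policy pol" and kernel: "\<And>a. P mu s a \<in> prob_simplex"
  shows "Pmat P mu pol s \<in> prob_simplex"
proof -
  have "(\<Sum>s'\<in>UNIV. Pmat P mu pol s s') = (\<Sum>a\<in>UNIV. pol s a * (\<Sum>s'\<in>UNIV. P mu s a s'))"
    unfolding Pmat_def by (subst sum.swap) (simp add: sum_distrib_left sum_distrib_right algebra_simps)
  also have "\<dots> = 1"
    using pol kernel by (simp add: is_policy_def prob_simplex_def)
  finally show ?thesis
    using pol kernel unfolding Pmat_def is_policy_def prob_simplex_def
    by (auto intro!: sum_nonneg)
qed

lemma sum_policy_kernel_split:
  assumes "\<And>a. (\<Sum>s'\<in>UNIV. P mu s a s') = 1"
  shows "(\<Sum>a\<in>UNIV. pol s a * (\<Sum>s'\<in>UNIV. P mu s a s' * (c a + h s')))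
           = (\<Sum>a\<in>UNIV. pol s a * c a) + (\<Sum>s'\<in>UNIV. Pmat P mu pol s s' * h s')"
proof -
  have "(\<Sum>s'\<in>UNIV. P mu s a s' * (c a + h s')) = c a + (\<Sum>s'\<in>UNIV. P mu s a s' * h s')" for a
    using assms by (simp add: algebra_simps sum.distrib sum_distrib_left[symmetric])
  then have "(\<Sum>a\<in>UNIV. pol s a * (\<Sum>s'\<in>UNIV. P mu s a s' * (c a + h s')))
               = (\<Sum>a\<in>UNIV. pol s a * c a) + (\<Sum>a\<in>UNIV. \<Sum>s'\<in>UNIV. pol s a * (P mu s a s' * h s'))"
    by (simp add: algebra_simps sum.distrib sum_distrib_left)
  also have "(\<Sum>a\<in>UNIV. \<Sum>s'\<in>UNIV. pol s a * (P mu s a s' * h s'))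
               = (\<Sum>s'\<in>UNIV. Pmat P mu pol s s' * h s')"
    unfolding Pmat_def sum_distrib_right by (subst sum.swap) (simp add: ac_simps)
  finally show ?thesis .
qed

definition mean_reward :: "('s \<Rightarrow> 'a::finite \<Rightarrow> ('s \<Rightarrow> real) \<Rightarrow> real) \<Rightarrow> ('s \<Rightarrow> 'a \<Rightarrow> real)
    \<Rightarrow> ('s \<Rightarrow> real) \<Rightarrow> 's \<Rightarrow> real" where
  "mean_reward r pol mu s = (\<Sum>a\<in>UNIV. pol s a * r s a mu)"

lemma Jfun_eq_sum_mean_reward:
  "Jfun P r pol mu = (\<Sum>s\<in>UNIV. nu P pol mu s * mean_reward r pol mu s)"
  unfolding Jfun_def mean_reward_def ..

lemma Vfun_eq_relative_value:
  "Vfun P r pol mu = relative_value (Pmat P mu pol) (nu P pol mu) (mean_reward r pol mu)"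
  unfolding Vfun_def relative_value_def Jfun_eq_sum_mean_reward mean_reward_def ..

lemma GV_eq:
  assumes kernel: "\<And>s a. P mu s a \<in> prob_simplex"
  shows "GV P r \<theta> V J mu x = nu P (softmax \<theta>) mu x *
           (mean_reward r (softmax \<theta>) mu x - J + (\<Sum>y\<in>UNIV. Pmat P mu (softmax \<theta>) x y * V y) - V x)"
proof -
  let ?pol = "softmax \<theta>"
  have "GV P r \<theta> V J mu x = (\<Sum>s\<in>UNIV. if s = x then nu P ?pol mu s * (\<Sum>a\<in>UNIV. ?pol s a *
          (\<Sum>s'\<in>UNIV. P mu s a s' * ((r s a mu - J - V s) + V s'))) else 0)"
    unfolding GV_def by (intro sum.cong) (auto simp: algebra_simps)
  also have "\<dots> = nu P ?pol mu x * (\<Sum>a\<in>UNIV. ?pol x a *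
                    (\<Sum>s'\<in>UNIV. P mu x a s' * ((r x a mu - J - V x) + V s')))"
    by simp
  also have "\<dots> = nu P ?pol mu x * ((\<Sum>a\<in>UNIV. ?pol x a * (r x a mu - J - V x))
                    + (\<Sum>y\<in>UNIV. Pmat P mu ?pol x y * V y))"
    by (subst sum_policy_kernel_split) (simp_all add: kernel prob_simplex_sum)
  also have "(\<Sum>a\<in>UNIV. ?pol x a * (r x a mu - J - V x)) = mean_reward r ?pol mu x - J - V x"
    unfolding mean_reward_def
    by (simp add: sum_softmax right_diff_distrib sum_subtractf sum_distrib_right[symmetric])
  finally show ?thesis
    by simp
qed

lemma GJ_eq:
  assumes kernel: "\<And>s a. P mu s a \<in> prob_simplex"
    and nu: "nu P (softmax \<theta>) mu \<in> prob_simplex"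
  shows "GJ P r cJ \<theta> J mu = cJ * (Jfun P r (softmax \<theta>) mu - J)"
proof -
  let ?pol = "softmax \<theta>"
  have "(\<Sum>a\<in>UNIV. ?pol s a * (\<Sum>s'\<in>UNIV. P mu s a s' * (cJ * (r s a mu - J))))
          = cJ * (mean_reward r ?pol mu s - J)" for s
  proof -
    have "(\<Sum>a\<in>UNIV. ?pol s a * (\<Sum>s'\<in>UNIV. P mu s a s' * (cJ * (r s a mu - J))))
            = (\<Sum>a\<in>UNIV. ?pol s a * (cJ * (r s a mu - J)))"
      by (simp add: kernel prob_simplex_sum flip: sum_distrib_right)
    also have "\<dots> = cJ * (mean_reward r ?pol mu s - J * (\<Sum>a\<in>UNIV. ?pol s a))"
      unfolding mean_reward_def
      by (simp add: algebra_simps sum_subtractf sum_distrib_left sum_distrib_right)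
    finally show ?thesis
      by (simp add: sum_softmax)
  qed
  then have "GJ P r cJ \<theta> J mu = (\<Sum>s\<in>UNIV. nu P ?pol mu s * (cJ * (mean_reward r ?pol mu s - J)))"
    unfolding GJ_def by simp
  also have "\<dots> = cJ * ((\<Sum>s\<in>UNIV. nu P ?pol mu s * mean_reward r ?pol mu s)
                       - J * (\<Sum>s\<in>UNIV. nu P ?pol mu s))"
    by (simp add: sum_distrib_left sum_distrib_right right_diff_distrib sum_subtractf algebra_simps)
  finally show ?thesis
    by (simp add: Jfun_eq_sum_mean_reward prob_simplex_sum[OF nu])
qed

lemma quad_form_eq:
  assumes kernel: "\<And>s a. P mu s a \<in> prob_simplex"
  shows "quad_form P \<theta> mu W = (\<Sum>s\<in>UNIV. nu P (softmax \<theta>) mu s *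
           (W s * ((\<Sum>y\<in>UNIV. Pmat P mu (softmax \<theta>) s y * W y) - W s)))"
  unfolding quad_form_def
proof (intro sum.cong refl arg_cong2[where f = "(*)"])
  let ?pol = "softmax \<theta>"
  fix s
  have "(\<Sum>a\<in>UNIV. ?pol s a * (\<Sum>s'\<in>UNIV. P mu s a s' * (W s * (W s' - W s))))
          = (\<Sum>a\<in>UNIV. ?pol s a * (\<Sum>s'\<in>UNIV. P mu s a s' * (- (W s * W s) + W s * W s')))"
    by (simp add: algebra_simps)
  also have "\<dots> = (\<Sum>a\<in>UNIV. ?pol s a * - (W s * W s)) + (\<Sum>s'\<in>UNIV. Pmat P mu ?pol s s' * (W s * W s'))"
    by (subst sum_policy_kernel_split) (simp_all add: kernel prob_simplex_sum)
  also have "(\<Sum>a\<in>UNIV. ?pol s a * - (W s * W s)) = - (W s * W s)"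
    by (simp add: sum_softmax sum_negf flip: sum_distrib_right)
  also have "- (W s * W s) + (\<Sum>s'\<in>UNIV. Pmat P mu ?pol s s' * (W s * W s'))
               = W s * ((\<Sum>y\<in>UNIV. Pmat P mu ?pol s y * W y) - W s)"
    by (simp add: sum_distrib_left algebra_simps)
  finally show "(\<Sum>a\<in>UNIV. ?pol s a * (\<Sum>s'\<in>UNIV. P mu s a s' * (W s * (W s' - W s))))
                  = W s * ((\<Sum>y\<in>UNIV. Pmat P mu ?pol s y * W y) - W s)" .
qed

lemma sum_proj_perp: "(\<Sum>s\<in>UNIV. proj_perp V s) = 0"
  unfolding proj_perp_def by (simp add: sum_subtractf)

lemma inner_vec_proj_perp_right:
  assumes "(\<Sum>s\<in>UNIV. W s) = 0"
  shows "inner_vec W (proj_perp G) = inner_vec W G"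
proof -
  have "inner_vec W (proj_perp G) = inner_vec W G - (\<Sum>s\<in>UNIV. W s) * ((\<Sum>t\<in>UNIV. G t) / real CARD('a))"
    unfolding inner_vec_def proj_perp_def
    by (simp add: right_diff_distrib sum_subtractf sum_distrib_right sum_divide_distrib)
  with assms show ?thesis
    by simp
qed

lemma drift_proj_perp:
  assumes "M x \<in> prob_simplex"
  shows "(\<Sum>y\<in>UNIV. M x y * proj_perp d y) - proj_perp d x = (\<Sum>y\<in>UNIV. M x y * d y) - d x"
proof -
  have "(\<Sum>y\<in>UNIV. M x y * proj_perp d y)
          = (\<Sum>y\<in>UNIV. M x y * d y) - (\<Sum>y\<in>UNIV. M x y) * ((\<Sum>t\<in>UNIV. d t) / real CARD('a))"
    unfolding proj_perp_def by (simp add: right_diff_distrib sum_subtractf sum_distrib_right sum_divide_distrib)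
  with prob_simplex_sum[OF assms] show ?thesis
    by (simp add: proj_perp_def)
qed

lemma abs_inner_vec_le_norm2:
  assumes q: "q \<in> prob_simplex"
  shows "\<bar>inner_vec W q\<bar> \<le> norm2 W"
proof -
  have "\<bar>W x\<bar> \<le> norm2 W" for x
  proof -
    have "(W x)^2 \<le> (\<Sum>y\<in>UNIV. (W y)^2)"
      by (rule member_le_sum) auto
    then show ?thesis
      unfolding norm2_def using real_le_rsqrt[of "\<bar>W x\<bar>"] by simp
  qed
  then have "\<bar>inner_vec W q\<bar> \<le> (\<Sum>x\<in>UNIV. norm2 W * q x)"
    using prob_simplex_nonneg[OF q] unfolding inner_vec_def
    by (intro order_trans[OF sum_abs] sum_mono) (simp add: abs_mult mult_right_mono)
  also have "\<dots> = norm2 W"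
    by (simp add: prob_simplex_sum[OF q] flip: sum_distrib_left)
  finally show ?thesis .
qed

lemma drift_inequality:
  fixes \<gamma> cJ w a e q :: real
  assumes \<gamma>: "0 < \<gamma>" "\<gamma> < 1" and q: "q \<le> - \<gamma> * w^2" and a: "\<bar>a\<bar> \<le> w" and cJ: "1 / \<gamma> \<le> cJ"
  shows "q - e * a - cJ * e^2 \<le> - (\<gamma> / 2) * (w^2 + e^2)"
proof -
  have "- e * a \<le> \<bar>e\<bar> * \<bar>a\<bar>"
    by (metis abs_ge_minus_self abs_mult minus_mult_left)
  also have "\<dots> \<le> \<bar>e\<bar> * w"
    using a by (simp add: mult_left_mono)
  finally have "- e * a \<le> \<bar>e\<bar> * w" .
  moreover have "e^2 / \<gamma> \<le> cJ * e^2"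
    using mult_right_mono[OF cJ, of "e^2"] by simp
  moreover have "- \<gamma> * w^2 + \<bar>e\<bar> * w - e^2 / \<gamma> \<le> - (\<gamma> / 2) * (w^2 + e^2)"
  proof -
    \<comment> \<open>The gap equals \<open>((\<gamma> w - \<bar>e\<bar>)\<^sup>2 + (1 - \<gamma>\<^sup>2) e\<^sup>2) / (2 \<gamma>)\<close>.\<close>
    have "0 \<le> ((\<gamma> * w - \<bar>e\<bar>)^2 + (1 - \<gamma>^2) * e^2) / (2 * \<gamma>)"
      using \<gamma> by (intro divide_nonneg_pos add_nonneg_nonneg mult_nonneg_nonneg)
        (auto simp: power_le_one)
    also have "\<dots> = - (\<gamma> / 2) * (w^2 + e^2) - (- \<gamma> * w^2 + \<bar>e\<bar> * w - e^2 / \<gamma>)"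
      using \<gamma> by (simp add: field_simps power2_eq_square)
    finally show ?thesis
      by simp
  qed
  ultimately show ?thesis
    using q by linarith
qed

lemma assumption1_geometric_mixing:
  assumes "assumption1 P C0 C1" and "is_policy pol" and "mu \<in> prob_simplex"
  shows "geometric_mixing (Pmat P mu pol) (nu P pol mu) C0 C1"
  using assms unfolding assumption1_def geometric_mixing_def nu_def by auto

lemma GV_eq_drift:
  fixes r V
  assumes kernel: "\<And>s a. P mu s a \<in> prob_simplex"
    and mix: "geometric_mixing (Pmat P mu (softmax \<theta>)) (nu P (softmax \<theta>) mu) C0 C1"
  defines "W \<equiv> proj_perp (\<lambda>s. V s - Vfun P r (softmax \<theta>) mu s)"
  shows "GV P r \<theta> V J mu x = nu P (softmax \<theta>) mu x *
           ((\<Sum>y\<in>UNIV. Pmat P mu (softmax \<theta>) x y * W y) - W x - (J - Jfun P r (softmax \<theta>) mu))"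
proof -
  let ?pol = "softmax \<theta>"
  let ?M = "Pmat P mu ?pol"
  let ?Vv = "Vfun P r ?pol mu"
  have rows: "?M s \<in> prob_simplex" for s
    by (intro Pmat_in_prob_simplex softmax_is_policy kernel)
  have poisson: "?Vv x = mean_reward r ?pol mu x - Jfun P r ?pol mu + (\<Sum>y\<in>UNIV. ?M x y * ?Vv y)"
    unfolding Vfun_eq_relative_value Jfun_eq_sum_mean_reward
    by (rule relative_value_poisson[OF rows mix])
  have "(\<Sum>y\<in>UNIV. ?M x y * (V y - ?Vv y)) = (\<Sum>y\<in>UNIV. ?M x y * V y) - (\<Sum>y\<in>UNIV. ?M x y * ?Vv y)"
    by (simp add: right_diff_distrib sum_subtractf)
  then have "mean_reward r ?pol mu x - J + (\<Sum>y\<in>UNIV. ?M x y * V y) - V x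
               = (\<Sum>y\<in>UNIV. ?M x y * (V y - ?Vv y)) - (V x - ?Vv x) - (J - Jfun P r ?pol mu)"
    using poisson by simp
  also have "\<dots> = (\<Sum>y\<in>UNIV. ?M x y * W y) - W x - (J - Jfun P r ?pol mu)"
    using drift_proj_perp[where M = ?M and x = x and d = "\<lambda>s. V s - ?Vv s", OF rows] unfolding W_def by simp
  finally show ?thesis
    unfolding GV_eq[where P = P and mu = mu, OF kernel] by simp
qed

lemma inner_proj_perp_GV_eq:
  fixes r V
  assumes kernel: "\<And>s a. P mu s a \<in> prob_simplex"
    and mix: "geometric_mixing (Pmat P mu (softmax \<theta>)) (nu P (softmax \<theta>) mu) C0 C1"
  defines "W \<equiv> proj_perp (\<lambda>s. V s - Vfun P r (softmax \<theta>) mu s)"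
  shows "inner_vec W (proj_perp (GV P r \<theta> V J mu))
           = quad_form P \<theta> mu W - (J - Jfun P r (softmax \<theta>) mu) * inner_vec W (nu P (softmax \<theta>) mu)"
proof -
  have "inner_vec W (proj_perp (GV P r \<theta> V J mu)) = inner_vec W (GV P r \<theta> V J mu)"
    unfolding W_def by (rule inner_vec_proj_perp_right[OF sum_proj_perp])
  also have "\<dots> = quad_form P \<theta> mu W - (J - Jfun P r (softmax \<theta>) mu) * inner_vec W (nu P (softmax \<theta>) mu)"
    unfolding inner_vec_def GV_eq_drift[OF kernel mix] quad_form_eq[where P = P and mu = mu, OF kernel]
      W_def[symmetric]
    by (simp add: algebra_simps sum_subtractf sum_distrib_left sum.distrib)
  finally show ?thesis .
qed

theorem lemma10:
  fixes P :: "('s::finite \<Rightarrow> real) \<Rightarrow> 's \<Rightarrow> 'a::finite \<Rightarrow> 's \<Rightarrow> real"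
    and r :: "'s \<Rightarrow> 'a \<Rightarrow> ('s \<Rightarrow> real) \<Rightarrow> real"
    and C0 C1 \<gamma> cJ :: real
    and \<theta> :: "'s \<Rightarrow> 'a \<Rightarrow> real" and mu V :: "'s \<Rightarrow> real" and J :: real
  assumes kernel: "\<And>m s a. m \<in> prob_simplex \<Longrightarrow> P m s a \<in> prob_simplex"
    and reward: "\<And>m s a. m \<in> prob_simplex \<Longrightarrow> 0 \<le> r s a m \<and> r s a m \<le> 1"
    and A1: "assumption1 P C0 C1"
    and gamma: "0 < \<gamma>" "\<gamma> < 1"
    and gamma_prop: "\<And>\<theta>' m W. m \<in> prob_simplex \<Longrightarrow> (\<Sum>s\<in>UNIV. W s) = 0 \<Longrightarrow>
                        quad_form P \<theta>' m W \<le> - \<gamma> * (norm2 W)^2"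
    and cJ: "cJ \<ge> 1 / \<gamma>"
    and mu: "mu \<in> prob_simplex"
  shows "inner_vec (proj_perp (\<lambda>s. V s - Vfun P r (softmax \<theta>) mu s)) (proj_perp (GV P r \<theta> V J mu))
           + (J - Jfun P r (softmax \<theta>) mu) * GJ P r cJ \<theta> J mu
         \<le> - (\<gamma> / 2) * ((norm2 (proj_perp (\<lambda>s. V s - Vfun P r (softmax \<theta>) mu s)))^2
                        + (J - Jfun P r (softmax \<theta>) mu)^2)"
proof -
  define W where "W = proj_perp (\<lambda>s. V s - Vfun P r (softmax \<theta>) mu s)"
  define e where "e = J - Jfun P r (softmax \<theta>) mu"
  have kernel_mu: "P mu s a \<in> prob_simplex" for s a
    using kernel[OF mu] .
  have mix: "geometric_mixing (Pmat P mu (softmax \<theta>)) (nu P (softmax \<theta>) mu) C0 C1"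
    by (rule assumption1_geometric_mixing[OF A1 softmax_is_policy mu])
  have rows: "Pmat P mu (softmax \<theta>) s \<in> prob_simplex" for s
    by (intro Pmat_in_prob_simplex softmax_is_policy kernel_mu)
  have nu: "nu P (softmax \<theta>) mu \<in> prob_simplex"
    by (rule prob_simplex_if_geometric_mixing[OF rows mix])
  have GJ: "GJ P r cJ \<theta> J mu = - cJ * e"
    unfolding GJ_eq[where P = P and mu = mu, OF kernel_mu nu] e_def by (simp add: algebra_simps)
  have "inner_vec W (proj_perp (GV P r \<theta> V J mu)) + e * GJ P r cJ \<theta> J mu
          = quad_form P \<theta> mu W - e * inner_vec W (nu P (softmax \<theta>) mu) - cJ * e^2"
    unfolding GJ W_def e_def inner_proj_perp_GV_eq[OF kernel_mu mix] by (simp add: power2_eq_square)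
  also have "\<dots> \<le> - (\<gamma> / 2) * ((norm2 W)^2 + e^2)"
    using gamma_prop[OF mu, of W] sum_proj_perp abs_inner_vec_le_norm2[OF nu]
    by (intro drift_inequality[OF gamma _ _ cJ]) (auto simp: W_def)
  finally show ?thesis
    unfolding W_def e_def .
qed

end
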